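(* Let $f,g:\mathcal{O}\to\mathcal{F}$ be scaling maps with scaling ratios $q^{\lambda_f}$ and $q^{\lambda_g}$, where $\lambda_f>\lambda_g\ge0$, and let $\tilde f(x)=[f(x)]$, $\tilde g(x)=[g(x)]$. Let $D\subset\mathcal{O}$ be a disk of radius $q^{-\gamma}$ with $0\le\gamma\le\lambda_f-\lambda_g$. Then $$\mu\big(\tilde f^{-1}(D)\cap\tilde g^{-1}(D)\big)=\mathbb{E}\big(1_D\circ\tilde f\cdot 1_D\circ\tilde g\big)=\mu(D)^2,$$ where $\mathbb{E}$ is expectation with respect to the normalized Haar measure $\mu$ on $\mathcal{O}$.
   Context: $\mathcal{F}$ is a non-Archimedean local field with valuation ring $\mathcal{O}$, maximal ideal $\mathfrak{p}$, $q=\#\mathcal{O}/\mathfrak{p}$, normalized absolute value $|\cdot|_\mathfrak{p}$, prime element $\pi$. Fix representatives $C\subset\mathcal{O}$ of $\mathcal{O}/\mathfrak{p}$ with $0\in C$; writing $x=\sum_{n\ge v}c_n\pi^n$ ($c_n\in C$), $[x]=\sum_{n\ge0}c_n\pi^n$. A disk of radius $q^{k}$ is $\{x:|x-a|_\mathfrak{p}\le q^k\}$. A map $f:\Omega\to\mathcal{F}$ is scaling with ratio $q^\lambda$ if $|f(x)-f(y)|_\mathfrak{p}=q^\lambda|x-y|_\mathfrak{p}$ for all $x,y$. $\mu$ is Haar measure with $\mu(\mathcal{O})=1$; $1_D$ is the indicator of $D$. *)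

theory Defs
  imports "HOL-Analysis.Analysis"
begin

text \<open>The normalized absolute value is nabs, the residue
  field has q elements, pi is a prime element, C is the fixed set of representatives
  of O/p (with 0 in C).\<close>

definition valring :: "('a::field \<Rightarrow> real) \<Rightarrow> 'a set" where
  "valring nabs = {x. nabs x \<le> 1}"

definition disk :: "('a::field \<Rightarrow> real) \<Rightarrow> nat \<Rightarrow> 'a \<Rightarrow> int \<Rightarrow> 'a set" where
  "disk nabs q a k = {x. nabs (x - a) \<le> real q powi k}"

definition nonarch_local_field ::
  "('a::field \<Rightarrow> real) \<Rightarrow> nat \<Rightarrow> 'a \<Rightarrow> 'a set \<Rightarrow> bool" where
  "nonarch_local_field nabs q \<pi> C \<longleftrightarrow>
     (\<forall>x. nabs x \<ge> 0) \<and> (\<forall>x. nabs x = 0 \<longleftrightarrow> x = 0) \<and>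
     (\<forall>x y. nabs (x * y) = nabs x * nabs y) \<and>
     (\<forall>x y. nabs (x + y) \<le> max (nabs x) (nabs y)) \<and>
     (\<forall>x. x \<noteq> 0 \<longrightarrow> (\<exists>k::int. nabs x = real q powi k)) \<and>
     nabs \<pi> = 1 / real q \<and>
     finite C \<and> card C = q \<and> 0 \<in> C \<and> C \<subseteq> valring nabs \<and>
     (\<forall>x\<in>valring nabs. \<exists>!c\<in>C. nabs (x - c) < 1) \<and>
     (\<forall>s::nat \<Rightarrow> 'a. (\<forall>e>0. \<exists>N. \<forall>m\<ge>N. \<forall>n\<ge>N. nabs (s m - s n) < e) \<longrightarrow>
        (\<exists>l. \<forall>e>0. \<exists>N. \<forall>n\<ge>N. nabs (s n - l) < e))"

text \<open>Normalized Haar measure: translation invariant measure on the sigma-algebra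
  generated by the disks (= Borel sets), with mu(O) = 1.\<close>

definition haar_normalized ::
  "('a::field \<Rightarrow> real) \<Rightarrow> nat \<Rightarrow> 'a measure \<Rightarrow> bool" where
  "haar_normalized nabs q M \<longleftrightarrow>
     space M = UNIV \<and>
     sets M = sigma_sets UNIV {disk nabs q a k | a k. True} \<and>
     (\<forall>A\<in>sets M. \<forall>a. emeasure M ((\<lambda>x. a + x) ` A) = emeasure M A) \<and>
     emeasure M (valring nabs) = 1"

definition expands ::
  "('a::field \<Rightarrow> real) \<Rightarrow> 'a set \<Rightarrow> 'a \<Rightarrow> (int \<Rightarrow> 'a) \<Rightarrow> int \<Rightarrow> 'a \<Rightarrow> bool" where
  "expands nabs C \<pi> c v x \<longleftrightarrow>
     (\<forall>n. c n \<in> C) \<and> (\<forall>n<v. c n = 0) \<and>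
     (\<forall>e>0. \<exists>N0. \<forall>N\<ge>N0. nabs (x - (\<Sum>n\<in>{v..N}. c n * \<pi> powi n)) < e)"

text \<open>[x] = sum_{n>=0} c_n pi^n.\<close>

definition bracket :: "('a::field \<Rightarrow> real) \<Rightarrow> 'a set \<Rightarrow> 'a \<Rightarrow> 'a \<Rightarrow> 'a" where
  "bracket nabs C \<pi> x =
     (THE y. \<exists>c v. expands nabs C \<pi> c v x \<and>
                  expands nabs C \<pi> (\<lambda>n. if n \<ge> 0 then c n else 0) 0 y)"

definition scaling :: "('a::field \<Rightarrow> real) \<Rightarrow> nat \<Rightarrow> 'a set \<Rightarrow> ('a \<Rightarrow> 'a) \<Rightarrow> int \<Rightarrow> bool" where
  "scaling nabs q \<Omega> f lam \<longleftrightarrow>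
     (\<forall>x\<in>\<Omega>. \<forall>y\<in>\<Omega>. nabs (f x - f y) = real q powi lam * nabs (x - y))"

end

theory Submission
  imports Defs
begin

text \<open>
  Put N = lg + \<gamma>. Since g stretches distances by q^lg and [y + e] = [y] + e for e \<in> \<O>,
  whether [g x] \<in> D depends only on the disk of radius q^-N around x. On such a disk, and
  in fact on every disk of radius q^-lf, [f x] differs from f x by a constant; f maps the
  q^\<gamma> subdisks of radius q^(-lf-\<gamma>) to pairwise different disks of radius q^-\<gamma> inside
  a disk of radius 1, so by counting exactly one of them is sent into a given such disk.
  Hence [f x] \<in> D on a fraction q^-\<gamma> of each disk of radius q^-N, and the two events
  are independent.
\<close>

lemma sum_int_interval_extend:
  fixes F :: "int \<Rightarrow> 'b::comm_monoid_add"
  assumes "\<And>n. n < v \<Longrightarrow> F n = 0" "w \<le> v"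
  shows "(\<Sum>n\<in>{w..N}. F n) = (\<Sum>n\<in>{v..N}. F n)"
  using assms by (intro sum.mono_neutral_right) auto

lemma integral_indicator_pair:
  assumes "\<Omega> \<in> sets M" "{x \<in> \<Omega>. F x \<in> D \<and> G x \<in> D} \<in> sets M"
  shows "(\<integral>x. indicator D (F x) * indicator D (G x) \<partial>(restrict_space M \<Omega>))
    = measure M {x \<in> \<Omega>. F x \<in> D \<and> G x \<in> D}"
proof -
  define S where "S = {x \<in> \<Omega>. F x \<in> D \<and> G x \<in> D}"
  have "(\<integral>x. indicator D (F x) * indicator D (G x) \<partial>(restrict_space M \<Omega>))
      = (\<integral>x. indicator S x \<partial>(restrict_space M \<Omega>) :: real)"
    by (intro Bochner_Integration.integral_cong) (auto simp: S_def indicator_def space_restrict_space)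
  also have "\<dots> = measure (restrict_space M \<Omega>) (S \<inter> space (restrict_space M \<Omega>))"
    by (rule Bochner_Integration.integral_indicator)
  also have "S \<inter> space (restrict_space M \<Omega>) = S"
    using sets.sets_into_space[OF assms(2)] by (auto simp: S_def space_restrict_space)
  also have "measure (restrict_space M \<Omega>) S = measure M S"
    using assms(1) by (intro measure_restrict_space) (auto simp: S_def)
  finally show ?thesis
    by (simp add: S_def)
qed

section \<open>The ultrametric absolute value\<close>

locale local_field =
  fixes nabs :: "'a::field \<Rightarrow> real" and q :: nat and \<pi> :: 'a and C :: "'a set"
  assumes local_field: "nonarch_local_field nabs q \<pi> C"
begin

abbreviation Q :: real where "Q \<equiv> real q"
abbreviation \<O> :: "'a set" where "\<O> \<equiv> valring nabs"

lemma nabs_nonneg: "nabs x \<ge> 0"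
  and nabs_eq_0_iff [simp]: "nabs x = 0 \<longleftrightarrow> x = 0"
  and nabs_mult: "nabs (x * y) = nabs x * nabs y"
  and nabs_add_le_max: "nabs (x + y) \<le> max (nabs x) (nabs y)"
  and nabs_in_value_group: "x \<noteq> 0 \<Longrightarrow> \<exists>k::int. nabs x = Q powi k"
  and nabs_pi: "nabs \<pi> = 1 / Q"
  and finite_C: "finite C" and card_C: "card C = q" and zero_in_C: "0 \<in> C"
  and C_subset_O: "C \<subseteq> \<O>"
  and residue_rep_unique: "x \<in> \<O> \<Longrightarrow> \<exists>!c\<in>C. nabs (x - c) < 1"
  using local_field unfolding nonarch_local_field_def by auto

lemma mem_O_iff: "x \<in> \<O> \<longleftrightarrow> nabs x \<le> 1"
  by (simp add: valring_def)

lemma nabs_zero [simp]: "nabs 0 = 0"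
  by simp

lemma nabs_one [simp]: "nabs 1 = 1"
proof -
  have "nabs 1 * nabs 1 = nabs 1 * 1"
    using nabs_mult[of 1 1] by simp
  then show ?thesis
    by (metis mult_left_cancel nabs_eq_0_iff zero_neq_one)
qed

lemma nabs_inverse: "nabs (inverse x) = inverse (nabs x)"
proof (cases "x = 0")
  case False
  then have "nabs x * nabs (inverse x) = 1"
    by (simp flip: nabs_mult)
  then show ?thesis
    by (metis inverse_unique)
qed simp

lemma nabs_divide: "nabs (x / y) = nabs x / nabs y"
  by (simp add: divide_inverse nabs_mult nabs_inverse)

lemma nabs_power: "nabs (x ^ n) = nabs x ^ n"
  by (induction n) (simp_all add: nabs_mult)

lemma nabs_power_int: "nabs (x powi n) = nabs x powi n"
  by (simp add: power_int_def nabs_power nabs_inverse power_inverse)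

lemma nabs_minus [simp]: "nabs (- x) = nabs x"
proof -
  have "nabs (-1) ^ 2 = 1"
    by (simp add: power2_eq_square flip: nabs_mult)
  then have "nabs (-1) = 1"
    using nabs_nonneg[of "-1"] by (simp add: power2_eq_1_iff)
  then show ?thesis
    using nabs_mult[of "-1" x] by simp
qed

lemma nabs_minus_commute: "nabs (x - y) = nabs (y - x)"
  by (metis minus_diff_eq nabs_minus)

lemma nabs_diff_le_max: "nabs (x - y) \<le> max (nabs x) (nabs y)"
  using nabs_add_le_max[of x "- y"] by simp

lemma nabs_add_le: "nabs x \<le> r \<Longrightarrow> nabs y \<le> r \<Longrightarrow> nabs (x + y) \<le> r"
  using nabs_add_le_max[of x y] by simp

lemma nabs_diff_le: "nabs x \<le> r \<Longrightarrow> nabs y \<le> r \<Longrightarrow> nabs (x - y) \<le> r"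
  using nabs_diff_le_max[of x y] by simp

lemma nabs_diff_trans:
  assumes "nabs (x - y) \<le> r" "nabs (y - z) \<le> r"
  shows "nabs (x - z) \<le> r"
proof -
  have "nabs ((x - y) + (y - z)) \<le> r"
    by (rule nabs_add_le[OF assms])
  then show ?thesis
    by simp
qed

lemma nabs_add_eq_left:
  assumes "nabs y < nabs x"
  shows "nabs (x + y) = nabs x"
proof -
  have "nabs x \<le> max (nabs (x + y)) (nabs y)"
    using nabs_add_le_max[of "x + y" "- y"] by simp
  then show ?thesis
    using nabs_add_le_max[of x y] assms by linarith
qed

lemma nabs_sum_le:
  assumes "finite A" "\<And>i. i \<in> A \<Longrightarrow> nabs (F i) \<le> B" "B \<ge> 0"
  shows "nabs (sum F A) \<le> B"
  using assms
proof (induction A rule: finite_induct)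
  case (insert a A)
  have "nabs (F a + sum F A) \<le> B"
    using insert.prems insert.IH by (intro nabs_add_le) blast+
  then show ?case
    using insert.hyps by (subst sum.insert)
qed simp

lemma nabs_diff_O: "x \<in> \<O> \<Longrightarrow> y \<in> \<O> \<Longrightarrow> nabs (x - y) \<le> 1"
  using nabs_diff_le_max[of x y] by (simp add: mem_O_iff)

lemma add_in_O: "x \<in> \<O> \<Longrightarrow> y \<in> \<O> \<Longrightarrow> x + y \<in> \<O>"
  by (simp add: mem_O_iff nabs_add_le)

section \<open>The residue field and the prime element\<close>

lemma q_ge_2: "q \<ge> 2"
proof (rule ccontr)
  assume "\<not> q \<ge> 2"
  moreover have "q \<noteq> 0"
    using card_C finite_C zero_in_C card_gt_0_iff by fastforce
  ultimately have "card C = 1"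
    using card_C by simp
  then obtain c where "C = {c}"
    by (rule card_1_singletonE)
  with zero_in_C have "C = {0}"
    by simp
  moreover obtain c where "c \<in> C" "nabs (1 - c) < 1"
    using residue_rep_unique[of 1] by (auto simp: mem_O_iff)
  ultimately show False
    by simp
qed

lemma Q_gt_1: "Q > 1"
  using q_ge_2 by simp

lemma pi_nonzero: "\<pi> \<noteq> 0"
  using nabs_pi Q_gt_1 by auto

lemma nabs_pi_power_int: "nabs (\<pi> powi n) = Q powi (- n)"
  by (simp add: nabs_power_int nabs_pi power_int_minus power_int_inverse[symmetric] divide_inverse)

lemma nabs_less_1_imp_le:
  assumes "nabs x < 1"
  shows "nabs x \<le> 1 / Q"
proof (cases "x = 0")
  case False
  then obtain k where k: "nabs x = Q powi k"
    using nabs_in_value_group by blast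
  have "k < 0"
  proof (rule ccontr)
    assume "\<not> k < 0"
    then have "Q powi k \<ge> 1"
      using Q_gt_1 by (simp add: one_le_power_int)
    with k assms show False
      by simp
  qed
  then have "Q powi k \<le> Q powi (-1)"
    using Q_gt_1 by (intro power_int_increasing) auto
  then show ?thesis
    using k by (simp add: power_int_minus divide_inverse)
qed (use Q_gt_1 in simp)

lemma nabs_C_le_1: "c \<in> C \<Longrightarrow> nabs c \<le> 1"
  using C_subset_O by (auto simp: mem_O_iff)

lemma C_eq_if_nabs_less:
  assumes "c \<in> C" "c' \<in> C" "nabs (c - c') < 1"
  shows "c = c'"
proof -
  have "c \<in> \<O>"
    using C_subset_O assms(1) by blast
  with residue_rep_unique[of c] assms show ?thesis
    by (metis cancel_comm_monoid_add_class.diff_cancel nabs_zero zero_less_one)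
qed

lemma nabs_diff_C:
  assumes "c \<in> C" "c' \<in> C" "c \<noteq> c'"
  shows "nabs (c - c') = 1"
proof -
  have "nabs (c - c') \<le> 1"
    using nabs_diff_le_max[of c c'] nabs_C_le_1[OF assms(1)] nabs_C_le_1[OF assms(2)] by simp
  moreover have "\<not> nabs (c - c') < 1"
    using C_eq_if_nabs_less assms by blast
  ultimately show ?thesis
    by simp
qed

lemma leading_digit_eq:
  assumes "c \<in> C" "c' \<in> C" "s \<in> \<O>" "s' \<in> \<O>" "nabs ((c + \<pi> * s) - (c' + \<pi> * s')) < 1"
  shows "c = c'"
proof -
  have "nabs (\<pi> * (s - s')) \<le> 1 / Q"
    using nabs_diff_O[OF assms(3,4)] Q_gt_1 by (simp add: nabs_mult nabs_pi divide_le_cancel)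
  then have "nabs (\<pi> * (s - s')) < 1"
    using Q_gt_1 by (simp add: order_le_less_trans)
  moreover have "c - c' = ((c + \<pi> * s) - (c' + \<pi> * s')) - \<pi> * (s - s')"
    by (simp add: algebra_simps)
  ultimately have "nabs (c - c') < 1"
    using assms(5) nabs_diff_le_max[of "(c + \<pi> * s) - (c' + \<pi> * s')" "\<pi> * (s - s')"]
    by (simp only:)
  then show ?thesis
    using C_eq_if_nabs_less assms(1,2) by blast
qed

section \<open>Disks and digit representatives\<close>

definition rad :: "nat \<Rightarrow> real" where
  "rad m = inverse (Q ^ m)"

definition cdisk :: "'a \<Rightarrow> nat \<Rightarrow> 'a set" where
  "cdisk y m = {x. nabs (x - y) \<le> rad m}"

lemma rad_pos: "rad m > 0"
  using Q_gt_1 by (simp add: rad_def)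

lemma rad_0 [simp]: "rad 0 = 1"
  by (simp add: rad_def)

lemma rad_add: "rad (m + n) = rad m * rad n"
  by (simp add: rad_def power_add)

lemma rad_Suc: "rad (Suc m) = rad m / Q"
  by (simp add: rad_def field_simps)

lemma rad_antimono: "m \<le> n \<Longrightarrow> rad n \<le> rad m"
  using Q_gt_1 by (simp add: rad_def le_imp_inverse_le power_increasing)

lemma rad_le_1: "rad m \<le> 1"
  using rad_antimono[of 0 m] by simp

lemma Q_power_mult_rad: "Q ^ m * rad m = 1"
  using Q_gt_1 by (simp add: rad_def)

lemma ex_rad_less:
  assumes "e > 0"
  obtains n where "rad n < e"
proof -
  obtain n where "(1 / Q) ^ n < e"
    using real_arch_pow_inv[OF assms, of "1 / Q"] Q_gt_1 by auto
  then show ?thesis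
    using that by (simp add: rad_def power_one_over inverse_eq_divide)
qed

lemma nabs_pi_power: "nabs (\<pi> ^ n) = rad n"
  by (simp add: nabs_power nabs_pi rad_def power_one_over inverse_eq_divide)

lemma mem_cdisk_iff: "x \<in> cdisk y m \<longleftrightarrow> nabs (x - y) \<le> rad m"
  by (simp add: cdisk_def)

lemma disk_eq_cdisk: "disk nabs q y (- int m) = cdisk y m"
  by (simp add: disk_def cdisk_def rad_def power_int_minus)

lemma O_eq_cdisk: "\<O> = cdisk 0 0"
  by (simp add: cdisk_def valring_def)

lemma cdisk_subset_O:
  assumes "v \<in> \<O>"
  shows "cdisk v l \<subseteq> \<O>"
proof
  fix x
  assume "x \<in> cdisk v l"
  then have "nabs ((x - v) + v) \<le> 1"
    using assms rad_le_1[of l] by (intro nabs_add_le) (auto simp: mem_cdisk_iff mem_O_iff)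
  then show "x \<in> \<O>"
    by (simp add: mem_O_iff)
qed

lemma cdisk_translate: "cdisk y m = (\<lambda>x. (y - y') + x) ` cdisk y' m"
proof -
  have "x \<in> (\<lambda>x. (y - y') + x) ` cdisk y' m" if "x \<in> cdisk y m" for x
    using that by (intro image_eqI[of _ _ "x - (y - y')"]) (auto simp: mem_cdisk_iff algebra_simps)
  then show ?thesis
    by (auto simp: mem_cdisk_iff algebra_simps)
qed

lemma center_in_cdisk: "y \<in> cdisk y m"
  using rad_pos[of m] by (simp add: mem_cdisk_iff)

lemma cdisk_antimono: "m \<le> n \<Longrightarrow> cdisk y n \<subseteq> cdisk y m"
  using rad_antimono by (force simp: mem_cdisk_iff)

lemma cdisk_eq_if_mem:
  assumes "y \<in> cdisk d m"
  shows "cdisk d m = cdisk y m"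
proof -
  have "nabs (d - y) \<le> rad m" "nabs (y - d) \<le> rad m"
    using assms nabs_minus_commute by (auto simp: mem_cdisk_iff)
  then show ?thesis
    unfolding cdisk_def by (auto intro: nabs_diff_trans)
qed

lemma mem_cdisk_iff_if_close:
  assumes "y \<in> cdisk y' m"
  shows "y \<in> cdisk a m \<longleftrightarrow> y' \<in> cdisk a m"
  using assms cdisk_eq_if_mem center_in_cdisk by metis

primrec reps :: "nat \<Rightarrow> 'a set" where
  "reps 0 = {0}"
| "reps (Suc m) = (\<lambda>(c, r). c + \<pi> * r) ` (C \<times> reps m)"

lemma reps_subset_O: "reps m \<subseteq> \<O>"
proof (induction m)
  case (Suc m)
  have "c + \<pi> * r \<in> \<O>" if "c \<in> C" "r \<in> reps m" for c r
  proof -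
    have "nabs (\<pi> * r) \<le> 1"
      using Suc that(2) Q_gt_1 nabs_nonneg[of r]
      by (auto simp: mem_O_iff nabs_mult nabs_pi intro: mult_le_one)
    then show ?thesis
      using nabs_C_le_1[OF that(1)] by (simp add: mem_O_iff nabs_add_le)
  qed
  then show ?case
    by auto
qed (simp add: mem_O_iff)

lemma nabs_reps_le_1: "r \<in> reps m \<Longrightarrow> nabs r \<le> 1"
  using reps_subset_O[of m] mem_O_iff by blast

lemma finite_reps: "finite (reps m)"
  by (induction m) (simp_all add: finite_C)

lemma card_reps: "card (reps m) = q ^ m"
proof (induction m)
  case (Suc m)
  have "inj_on (\<lambda>(c, r). c + \<pi> * r) (C \<times> reps m)"
  proof (rule inj_onI, clarify)
    fix c r c' r'
    assume "c \<in> C" "r \<in> reps m" "c' \<in> C" "r' \<in> reps m" and eq: "c + \<pi> * r = c' + \<pi> * r'"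
    moreover have "r \<in> \<O>" "r' \<in> \<O>"
      using reps_subset_O \<open>r \<in> reps m\<close> \<open>r' \<in> reps m\<close> by blast+
    moreover have "nabs ((c + \<pi> * r) - (c' + \<pi> * r')) < 1"
      using eq by simp
    ultimately have "c = c'"
      by (intro leading_digit_eq)
    with eq pi_nonzero show "c = c' \<and> r = r'"
      by simp
  qed
  then show ?case
    using Suc finite_C finite_reps[of m] by (simp add: card_image card_cartesian_product card_C)
qed simp

lemma reps_separated:
  "r \<in> reps m \<Longrightarrow> r' \<in> reps m \<Longrightarrow> nabs (r - r') \<le> rad m \<Longrightarrow> r = r'"
proof (induction m arbitrary: r r')
  case (Suc m)
  obtain c s where r: "r = c + \<pi> * s" "c \<in> C" "s \<in> reps m"
    using Suc.prems(1) by auto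
  obtain c' s' where r': "r' = c' + \<pi> * s'" "c' \<in> C" "s' \<in> reps m"
    using Suc.prems(2) by auto
  have "rad m / Q < 1"
    using rad_le_1[of m] Q_gt_1 by simp
  then have "nabs (r - r') < 1"
    using Suc.prems(3) by (simp add: rad_Suc)
  then have "c = c'"
    using r r' reps_subset_O by (intro leading_digit_eq) auto
  then have "r - r' = \<pi> * (s - s')"
    using r r' by (simp add: algebra_simps)
  then have "nabs (s - s') \<le> rad m"
    using Suc.prems(3) Q_gt_1 by (simp add: nabs_mult nabs_pi rad_Suc divide_le_cancel)
  then have "s = s'"
    using Suc.IH r r' by blast
  with r r' \<open>c = c'\<close> show ?case
    by simp
qed simp

lemma reps_cover: "x \<in> \<O> \<Longrightarrow> \<exists>r\<in>reps m. nabs (x - r) \<le> rad m"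
proof (induction m arbitrary: x)
  case (Suc m)
  then obtain c where c: "c \<in> C" "nabs (x - c) < 1"
    using residue_rep_unique by blast
  define y where "y = (x - c) / \<pi>"
  have "nabs y = nabs (x - c) * Q"
    using pi_nonzero by (simp add: y_def nabs_divide nabs_pi)
  also have "\<dots> \<le> 1"
    using nabs_less_1_imp_le[OF c(2)] Q_gt_1 by (simp add: field_simps)
  finally obtain r where r: "r \<in> reps m" "nabs (y - r) \<le> rad m"
    using Suc.IH by (auto simp: mem_O_iff)
  have "x - (c + \<pi> * r) = \<pi> * (y - r)"
    using pi_nonzero by (simp add: y_def field_simps)
  then have "nabs (x - (c + \<pi> * r)) \<le> rad (Suc m)"
    using r(2) Q_gt_1 by (simp add: nabs_mult nabs_pi rad_Suc divide_right_mono)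
  then show ?case
    using r c by auto
qed (simp add: mem_O_iff)

lemma cdisk_eq_UN_reps: "cdisk u n = (\<Union>r\<in>reps k. cdisk (u + \<pi> ^ n * r) (n + k))"
proof
  show "cdisk u n \<subseteq> (\<Union>r\<in>reps k. cdisk (u + \<pi> ^ n * r) (n + k))"
  proof
    fix x
    assume x: "x \<in> cdisk u n"
    define y where "y = (x - u) / \<pi> ^ n"
    have "nabs y \<le> 1"
      using x rad_pos[of n] by (simp add: y_def nabs_divide nabs_pi_power mem_cdisk_iff)
    then obtain r where r: "r \<in> reps k" "nabs (y - r) \<le> rad k"
      using reps_cover[of y k] by (auto simp: mem_O_iff)
    have "x - (u + \<pi> ^ n * r) = \<pi> ^ n * (y - r)"
      using pi_nonzero by (simp add: y_def field_simps)
    then have "nabs (x - (u + \<pi> ^ n * r)) \<le> rad (n + k)"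
      using r(2) rad_pos[of n] by (simp add: nabs_mult nabs_pi_power rad_add)
    with r(1) show "x \<in> (\<Union>r\<in>reps k. cdisk (u + \<pi> ^ n * r) (n + k))"
      by (auto simp: mem_cdisk_iff)
  qed
next
  show "(\<Union>r\<in>reps k. cdisk (u + \<pi> ^ n * r) (n + k)) \<subseteq> cdisk u n"
  proof clarify
    fix r x
    assume r: "r \<in> reps k" and x: "x \<in> cdisk (u + \<pi> ^ n * r) (n + k)"
    have "nabs (\<pi> ^ n * r) \<le> rad n"
      using nabs_reps_le_1[OF r] rad_pos[of n] by (simp add: nabs_mult nabs_pi_power mult_left_le)
    moreover have "nabs (x - (u + \<pi> ^ n * r)) \<le> rad n"
      using x rad_antimono[of n "n + k"] by (simp add: mem_cdisk_iff)
    ultimately have "nabs ((x - (u + \<pi> ^ n * r)) + \<pi> ^ n * r) \<le> rad n"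
      by (rule nabs_add_le[rotated])
    then show "x \<in> cdisk u n"
      by (simp add: mem_cdisk_iff)
  qed
qed

lemma disjoint_family_on_cdisk_reps:
  "disjoint_family_on (\<lambda>r. cdisk (u + \<pi> ^ n * r) (n + k)) (reps k)"
  unfolding disjoint_family_on_def
proof (intro ballI impI, rule ccontr)
  fix r r'
  assume rr: "r \<in> reps k" "r' \<in> reps k" "r \<noteq> r'"
    and "cdisk (u + \<pi> ^ n * r) (n + k) \<inter> cdisk (u + \<pi> ^ n * r') (n + k) \<noteq> {}"
  then obtain x where "nabs (x - (u + \<pi> ^ n * r)) \<le> rad (n + k)"
    "nabs (x - (u + \<pi> ^ n * r')) \<le> rad (n + k)"
    by (auto simp: mem_cdisk_iff)
  then have "nabs ((u + \<pi> ^ n * r) - (u + \<pi> ^ n * r')) \<le> rad (n + k)"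
    by (metis nabs_diff_trans nabs_minus_commute)
  moreover have "(u + \<pi> ^ n * r) - (u + \<pi> ^ n * r') = \<pi> ^ n * (r - r')"
    by (simp add: algebra_simps)
  ultimately have "nabs (r - r') \<le> rad k"
    using rad_pos[of n] by (simp add: nabs_mult nabs_pi_power rad_add)
  with rr show False
    using reps_separated by blast
qed

section \<open>Digit expansions\<close>

definition residue_digit :: "'a \<Rightarrow> 'a" where
  "residue_digit y = (THE c. c \<in> C \<and> nabs (y - c) < 1)"

lemma residue_digit:
  assumes "y \<in> \<O>"
  shows "residue_digit y \<in> C" "nabs (y - residue_digit y) < 1"
proof -
  have "\<exists>!c. c \<in> C \<and> nabs (y - c) < 1"
    using residue_rep_unique[OF assms] by blast
  from theI'[OF this] show "residue_digit y \<in> C" "nabs (y - residue_digit y) < 1"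
    unfolding residue_digit_def by blast+
qed

primrec remainder :: "'a \<Rightarrow> nat \<Rightarrow> 'a" where
  "remainder x 0 = x"
| "remainder x (Suc m) = (remainder x m - residue_digit (remainder x m)) / \<pi>"

definition digit :: "'a \<Rightarrow> nat \<Rightarrow> 'a" where
  "digit x m = residue_digit (remainder x m)"

lemma remainder_in_O: "x \<in> \<O> \<Longrightarrow> remainder x m \<in> \<O>"
proof (induction m)
  case (Suc m)
  have "nabs (remainder x m - residue_digit (remainder x m)) \<le> 1 / Q"
    using residue_digit(2)[OF Suc.IH[OF Suc.prems]] by (rule nabs_less_1_imp_le)
  then show ?case
    using Q_gt_1 by (simp add: mem_O_iff nabs_divide nabs_pi field_simps)
qed simp

lemma digit_in_C: "x \<in> \<O> \<Longrightarrow> digit x m \<in> C"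
  unfolding digit_def using residue_digit(1) remainder_in_O by blast

lemma digit_expansion: "x = (\<Sum>i<M. digit x i * \<pi> ^ i) + \<pi> ^ M * remainder x M"
proof (induction M)
  case (Suc M)
  have "remainder x M = digit x M + \<pi> * remainder x (Suc M)"
    using pi_nonzero by (simp add: digit_def)
  with Suc.IH show ?case
    by (simp add: algebra_simps del: remainder.simps)
qed simp

lemma nabs_diff_digit_sum_le:
  assumes "x \<in> \<O>"
  shows "nabs (x - (\<Sum>i<M. digit x i * \<pi> ^ i)) \<le> rad M"
proof -
  have "x - (\<Sum>i<M. digit x i * \<pi> ^ i) = \<pi> ^ M * remainder x M"
    by (subst digit_expansion[of x M]) simp
  moreover have "nabs (remainder x M) \<le> 1"
    using remainder_in_O[OF assms] by (simp add: mem_O_iff)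
  ultimately show ?thesis
    using rad_pos[of M] by (simp add: nabs_mult nabs_pi_power mult_left_le)
qed

lemma expandsD:
  assumes "expands nabs C \<pi> c v z"
  shows "\<And>n. c n \<in> C" "\<And>n. n < v \<Longrightarrow> c n = 0"
    "\<And>e. e > 0 \<Longrightarrow> \<exists>N0. \<forall>N\<ge>N0. nabs (z - (\<Sum>n\<in>{v..N}. c n * \<pi> powi n)) < e"
  using assms unfolding expands_def by blast+

abbreviation integral_digits :: "(int \<Rightarrow> 'a) \<Rightarrow> int \<Rightarrow> 'a" where
  "integral_digits c \<equiv> (\<lambda>n. if n \<ge> 0 then c n else 0)"

lemma expands_digits:
  assumes "x \<in> \<O>"
  shows "expands nabs C \<pi> (integral_digits (\<lambda>n. digit x (nat n))) 0 x"
  unfolding expands_def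
proof (intro conjI allI impI)
  fix e :: real
  assume "e > 0"
  then obtain n0 where n0: "rad n0 < e"
    by (rule ex_rad_less)
  show "\<exists>N0. \<forall>N\<ge>N0. nabs (x - (\<Sum>n\<in>{0..N}. (if n \<ge> 0 then digit x (nat n) else 0) * \<pi> powi n)) < e"
  proof (intro exI allI impI)
    fix N :: int
    assume N: "int n0 \<le> N"
    have "(\<Sum>n\<in>{0..N}. (if n \<ge> 0 then digit x (nat n) else 0) * \<pi> powi n)
        = (\<Sum>i\<in>{0..nat N}. digit x i * \<pi> ^ i)"
      using N by (intro sum.reindex_bij_witness[of _ int nat]) (auto simp: power_int_def)
    also have "\<dots> = (\<Sum>i<Suc (nat N). digit x i * \<pi> ^ i)"
      by (simp add: atLeast0AtMost lessThan_Suc_atMost)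
    finally have "nabs (x - (\<Sum>n\<in>{0..N}. (if n \<ge> 0 then digit x (nat n) else 0) * \<pi> powi n))
        \<le> rad (Suc (nat N))"
      using nabs_diff_digit_sum_le[OF assms] by (simp only:)
    also have "\<dots> \<le> rad n0"
      using N by (intro rad_antimono) simp
    finally show "nabs (x - (\<Sum>n\<in>{0..N}. (if n \<ge> 0 then digit x (nat n) else 0) * \<pi> powi n)) < e"
      using n0 by simp
  qed
qed (use digit_in_C[OF assms] zero_in_C in auto)

lemma expands_shift:
  assumes "expands nabs C \<pi> c v x"
  shows "expands nabs C \<pi> (\<lambda>n. c (n + k)) (v - k) (\<pi> powi (- k) * x)"
  unfolding expands_def
proof (intro conjI allI impI)
  fix e :: real
  assume "e > 0"
  then have "Q powi (- k) * e > 0"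
    using Q_gt_1 by simp
  then obtain N0 where N0: "\<forall>N\<ge>N0. nabs (x - (\<Sum>n\<in>{v..N}. c n * \<pi> powi n)) < Q powi (- k) * e"
    using expandsD(3)[OF assms] by blast
  show "\<exists>N0. \<forall>N\<ge>N0. nabs (\<pi> powi (- k) * x - (\<Sum>n\<in>{v - k..N}. c (n + k) * \<pi> powi n)) < e"
  proof (intro exI allI impI)
    fix N
    assume N: "N0 - k \<le> N"
    have "(\<Sum>n\<in>{v - k..N}. c (n + k) * \<pi> powi n)
        = (\<Sum>n\<in>{v - k..N}. \<pi> powi (- k) * (c (n + k) * \<pi> powi (n + k)))"
      using pi_nonzero by (intro sum.cong refl) (simp add: power_int_add power_int_minus field_simps)
    also have "\<dots> = \<pi> powi (- k) * (\<Sum>n\<in>{v - k..N}. c (n + k) * \<pi> powi (n + k))"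
      by (simp add: sum_distrib_left)
    also have "(\<Sum>n\<in>{v - k..N}. c (n + k) * \<pi> powi (n + k)) = (\<Sum>m\<in>{v..N + k}. c m * \<pi> powi m)"
      using sum.reindex[of "\<lambda>n. n + k" "{v - k..N}" "\<lambda>m. c m * \<pi> powi m"] by simp
    finally have "nabs (\<pi> powi (- k) * x - (\<Sum>n\<in>{v - k..N}. c (n + k) * \<pi> powi n))
        = Q powi k * nabs (x - (\<Sum>m\<in>{v..N + k}. c m * \<pi> powi m))"
      by (simp add: nabs_mult nabs_pi_power_int flip: right_diff_distrib)
    also have "\<dots> < Q powi k * (Q powi (- k) * e)"
      using N0 N Q_gt_1 by (intro mult_strict_left_mono) auto
    also have "\<dots> = e"
      using Q_gt_1 by (simp add: power_int_minus)
    finally show "nabs (\<pi> powi (- k) * x - (\<Sum>n\<in>{v - k..N}. c (n + k) * \<pi> powi n)) < e" .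
  qed
qed (use expandsD(1,2)[OF assms] in auto)

lemma ex_pi_power_mult_in_O: "\<exists>k. \<pi> ^ k * z \<in> \<O>"
proof (cases "z = 0")
  case False
  then have "nabs z > 0"
    using nabs_nonneg[of z] by (simp add: order_le_less)
  then have "1 / nabs z > 0"
    by simp
  then obtain k where "rad k < 1 / nabs z"
    by (rule ex_rad_less)
  with \<open>nabs z > 0\<close> show ?thesis
    by (intro exI[of _ k]) (simp add: mem_O_iff nabs_mult nabs_pi_power field_simps)
qed (simp add: mem_O_iff)

lemma expands_exists:
  obtains c k where "expands nabs C \<pi> c (- int k) z"
proof -
  obtain k where k: "\<pi> ^ k * z \<in> \<O>"
    using ex_pi_power_mult_in_O by blast
  have "\<pi> powi (- int k) * (\<pi> ^ k * z) = z"
    using pi_nonzero by (simp add: power_int_minus)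
  with expands_shift[OF expands_digits[OF k], of "int k"] show ?thesis
    using that by auto
qed

lemma expands_unique:
  assumes x: "expands nabs C \<pi> c v x" and y: "expands nabs C \<pi> c v y"
  shows "x = y"
proof (rule ccontr)
  assume "x \<noteq> y"
  then have e: "nabs (x - y) > 0"
    using nabs_nonneg[of "x - y"] by (simp add: order_le_less)
  obtain N1 where N1: "\<forall>N\<ge>N1. nabs (x - (\<Sum>n\<in>{v..N}. c n * \<pi> powi n)) < nabs (x - y)"
    using expandsD(3)[OF x e] by blast
  obtain N2 where N2: "\<forall>N\<ge>N2. nabs (y - (\<Sum>n\<in>{v..N}. c n * \<pi> powi n)) < nabs (x - y)"
    using expandsD(3)[OF y e] by blast
  define s where "s = (\<Sum>n\<in>{v..max N1 N2}. c n * \<pi> powi n)"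
  have "nabs ((x - s) - (y - s)) \<le> max (nabs (x - s)) (nabs (y - s))"
    by (rule nabs_diff_le_max)
  moreover have "nabs (x - s) < nabs (x - y)" "nabs (y - s) < nabs (x - y)"
    using N1 N2 by (simp_all add: s_def)
  ultimately show False
    by simp
qed

lemma sum_digits_split:
  assumes "\<And>n. n < v \<Longrightarrow> c n = 0" "N \<ge> -1"
  shows "(\<Sum>n\<in>{v..N}. c n * \<pi> powi n)
    = (\<Sum>n\<in>{v..-1}. c n * \<pi> powi n) + (\<Sum>n\<in>{0..N}. integral_digits c n * \<pi> powi n)"
proof -
  define w where "w = min v 0"
  have "(\<Sum>n\<in>{v..N}. c n * \<pi> powi n) = (\<Sum>n\<in>{w..N}. c n * \<pi> powi n)"
    and "(\<Sum>n\<in>{v..-1}. c n * \<pi> powi n) = (\<Sum>n\<in>{w..-1}. c n * \<pi> powi n)"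
    using assms(1) by (simp_all add: w_def sum_int_interval_extend[symmetric])
  moreover have "{w..N} = {w..-1} \<union> {0..N}"
    using assms(2) by (auto simp: w_def)
  moreover have "(\<Sum>n\<in>{0..N}. integral_digits c n * \<pi> powi n) = (\<Sum>n\<in>{0..N}. c n * \<pi> powi n)"
    by (intro sum.cong) auto
  ultimately show ?thesis
    by (simp add: sum.union_disjoint ivl_disj_int)
qed

lemma expands_iff_integral_digits:
  assumes "\<And>n. c n \<in> C" "\<And>n. n < v \<Longrightarrow> c n = 0"
  shows "expands nabs C \<pi> c v z
    \<longleftrightarrow> expands nabs C \<pi> (integral_digits c) 0 (z - (\<Sum>n\<in>{v..-1}. c n * \<pi> powi n))"
proof -
  define P where "P = (\<Sum>n\<in>{v..-1}. c n * \<pi> powi n)"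
  have split: "z - (\<Sum>n\<in>{v..N}. c n * \<pi> powi n)
      = (z - P) - (\<Sum>n\<in>{0..N}. integral_digits c n * \<pi> powi n)" if "N \<ge> -1" for N
    using sum_digits_split[OF assms(2) that] by (simp add: P_def)
  have conv: "(\<exists>N0. \<forall>N\<ge>N0. nabs (z - (\<Sum>n\<in>{v..N}. c n * \<pi> powi n)) < e)
    \<longleftrightarrow> (\<exists>N0. \<forall>N\<ge>N0. nabs ((z - P) - (\<Sum>n\<in>{0..N}. integral_digits c n * \<pi> powi n)) < e)" for e
  proof -
    have "\<forall>\<^sub>F N in at_top. (nabs (z - (\<Sum>n\<in>{v..N}. c n * \<pi> powi n)) < e)
        = (nabs ((z - P) - (\<Sum>n\<in>{0..N}. integral_digits c n * \<pi> powi n)) < e)"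
      using eventually_ge_at_top[of "-1 :: int"] by eventually_elim (simp only: split)
    then show ?thesis
      unfolding eventually_at_top_linorder[symmetric] by (rule eventually_subst)
  qed
  show ?thesis
    unfolding expands_def P_def[symmetric] conv using assms zero_in_C by simp
qed

lemma expands_integral_digits:
  assumes "expands nabs C \<pi> c v z"
  shows "expands nabs C \<pi> (integral_digits c) 0 (z - (\<Sum>n\<in>{v..-1}. c n * \<pi> powi n))"
  using expands_iff_integral_digits[of c v z] expandsD(1,2)[OF assms] assms by blast

lemma expands_in_O:
  assumes "expands nabs C \<pi> d 0 y"
  shows "y \<in> \<O>"
proof -
  obtain N0 where N0: "\<forall>N\<ge>N0. nabs (y - (\<Sum>n\<in>{0..N}. d n * \<pi> powi n)) < 1"
    using expandsD(3)[OF assms, of 1] by auto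
  define s where "s = (\<Sum>n\<in>{0..max N0 0}. d n * \<pi> powi n)"
  have "nabs (y - s) \<le> 1"
    using N0 by (simp add: s_def less_imp_le)
  moreover have "nabs s \<le> 1"
    unfolding s_def
  proof (rule nabs_sum_le)
    fix n
    assume "n \<in> {0..max N0 0}"
    then have "Q powi (- n) \<le> Q powi 0"
      using Q_gt_1 by (intro power_int_increasing) auto
    then show "nabs (d n * \<pi> powi n) \<le> 1"
      using nabs_C_le_1[OF expandsD(1)[OF assms]] Q_gt_1
      by (simp add: nabs_mult nabs_pi_power_int mult_le_one nabs_nonneg)
  qed simp_all
  ultimately have "nabs ((y - s) + s) \<le> 1"
    by (rule nabs_add_le)
  then show ?thesis
    by (simp add: mem_O_iff)
qed

section \<open>The integral part\<close>

lemma nabs_digit_diff_sum_le: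
  assumes c: "\<And>n. c n \<in> C" "\<And>n. c' n \<in> C"
  shows "nabs (\<Sum>n\<in>{a..b}. (c n - c' n) * \<pi> powi n) \<le> Q powi (- a)"
proof (rule nabs_sum_le)
  fix n
  assume "n \<in> {a..b}"
  then have "Q powi (- n) \<le> Q powi (- a)"
    using Q_gt_1 by (intro power_int_increasing) auto
  moreover have "nabs (c n - c' n) \<le> 1"
    using nabs_diff_le_max[of "c n" "c' n"] nabs_C_le_1[OF c(1)[of n]] nabs_C_le_1[OF c(2)[of n]]
    by simp
  then have "nabs ((c n - c' n) * \<pi> powi n) \<le> 1 * Q powi (- n)"
    unfolding nabs_mult nabs_pi_power_int using Q_gt_1 by (intro mult_right_mono) auto
  ultimately show "nabs ((c n - c' n) * \<pi> powi n) \<le> Q powi (- a)"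
    by simp
qed (use Q_gt_1 in simp_all)

lemma nabs_digit_diff_sum_eq:
  assumes c: "\<And>n. c n \<in> C" "\<And>n. c' n \<in> C" and "c j \<noteq> c' j" "j \<le> b"
  shows "nabs (\<Sum>n\<in>{j..b}. (c n - c' n) * \<pi> powi n) = Q powi (- j)"
proof -
  have "{j..b} = insert j {j+1..b}"
    using \<open>j \<le> b\<close> by auto
  then have "(\<Sum>n\<in>{j..b}. (c n - c' n) * \<pi> powi n)
      = (c j - c' j) * \<pi> powi j + (\<Sum>n\<in>{j+1..b}. (c n - c' n) * \<pi> powi n)"
    by simp
  moreover have "nabs ((c j - c' j) * \<pi> powi j) = Q powi (- j)"
    using nabs_diff_C[OF c(1) c(2) \<open>c j \<noteq> c' j\<close>] by (simp add: nabs_mult nabs_pi_power_int)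
  moreover have "nabs (\<Sum>n\<in>{j+1..b}. (c n - c' n) * \<pi> powi n) < Q powi (- j)"
  proof -
    have "nabs (\<Sum>n\<in>{j+1..b}. (c n - c' n) * \<pi> powi n) \<le> Q powi (- (j + 1))"
      by (rule nabs_digit_diff_sum_le[OF c])
    also have "\<dots> < Q powi (- j)"
      using Q_gt_1 by (intro power_int_strict_increasing) auto
    finally show ?thesis .
  qed
  ultimately show ?thesis
    using nabs_add_eq_left by simp
qed

lemma fractional_digit_sums_eq:
  assumes c: "\<And>n. c n \<in> C" "\<And>n. c' n \<in> C"
    and close: "nabs ((\<Sum>n\<in>{w..-1}. c n * \<pi> powi n) - (\<Sum>n\<in>{w..-1}. c' n * \<pi> powi n)) \<le> 1"
  shows "(\<Sum>n\<in>{w..-1}. c n * \<pi> powi n) = (\<Sum>n\<in>{w..-1}. c' n * \<pi> powi n)"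
proof (rule ccontr)
  define J where "J = {n\<in>{w..-1}. c n \<noteq> c' n}"
  have diff: "(\<Sum>n\<in>{w..-1}. c n * \<pi> powi n) - (\<Sum>n\<in>{w..-1}. c' n * \<pi> powi n)
      = (\<Sum>n\<in>{w..-1}. (c n - c' n) * \<pi> powi n)"
    by (simp add: left_diff_distrib sum_subtractf)
  assume "(\<Sum>n\<in>{w..-1}. c n * \<pi> powi n) \<noteq> (\<Sum>n\<in>{w..-1}. c' n * \<pi> powi n)"
  have "J \<noteq> {}"
  proof
    assume "J = {}"
    then have "(\<Sum>n\<in>{w..-1}. (c n - c' n) * \<pi> powi n) = 0"
      by (intro sum.neutral) (auto simp: J_def)
    with diff \<open>(\<Sum>n\<in>{w..-1}. c n * \<pi> powi n) \<noteq> _\<close> show False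
      by simp
  qed
  moreover have "finite J"
    unfolding J_def by (rule finite_subset[of _ "{w..-1}"]) auto
  ultimately obtain j where j: "j \<in> J" and j_min: "\<And>n. n \<in> J \<Longrightarrow> j \<le> n"
    using Min_in Min_le by blast
  \<comment> \<open>the lowest differing digit dominates the absolute value of the difference\<close>
  have "(\<Sum>n\<in>{w..-1}. (c n - c' n) * \<pi> powi n) = (\<Sum>n\<in>{j..-1}. (c n - c' n) * \<pi> powi n)"
    using j j_min by (intro sum.mono_neutral_right) (force simp: J_def)+
  then have "nabs (\<Sum>n\<in>{w..-1}. (c n - c' n) * \<pi> powi n) = Q powi (- j)"
    using nabs_digit_diff_sum_eq[OF c] j by (simp add: J_def)
  moreover have "Q powi 1 \<le> Q powi (- j)"
    using j Q_gt_1 by (intro power_int_increasing) (auto simp: J_def)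
  ultimately show False
    using close diff Q_gt_1 by simp
qed

lemma fractional_part_unique:
  assumes z: "expands nabs C \<pi> c v z" and z': "expands nabs C \<pi> c' v' z"
  shows "(\<Sum>n\<in>{v..-1}. c n * \<pi> powi n) = (\<Sum>n\<in>{v'..-1}. c' n * \<pi> powi n)"
proof -
  define w where "w = min v v'"
  define P where "P = (\<Sum>n\<in>{w..-1}. c n * \<pi> powi n)"
  define P' where "P' = (\<Sum>n\<in>{w..-1}. c' n * \<pi> powi n)"
  have P: "(\<Sum>n\<in>{v..-1}. c n * \<pi> powi n) = P"
    unfolding P_def w_def using expandsD(2)[OF z] by (simp add: sum_int_interval_extend[symmetric])
  have P': "(\<Sum>n\<in>{v'..-1}. c' n * \<pi> powi n) = P'"
    unfolding P'_def w_def using expandsD(2)[OF z'] by (simp add: sum_int_interval_extend[symmetric])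
  have "z - P \<in> \<O>" "z - P' \<in> \<O>"
    using expands_in_O[OF expands_integral_digits[OF z]] expands_in_O[OF expands_integral_digits[OF z']] P P'
    by simp_all
  then have "nabs (P - P') \<le> 1"
    using nabs_diff_O[of "z - P'" "z - P"] by simp
  then have "P = P'"
    unfolding P_def P'_def by (rule fractional_digit_sums_eq[OF expandsD(1)[OF z] expandsD(1)[OF z']])
  then show ?thesis
    using P P' by simp
qed

lemma bracket_eq:
  assumes z: "expands nabs C \<pi> c v z"
  shows "bracket nabs C \<pi> z = z - (\<Sum>n\<in>{v..-1}. c n * \<pi> powi n)"
  unfolding bracket_def
proof (rule the_equality)
  show "\<exists>c' v'. expands nabs C \<pi> c' v' z
      \<and> expands nabs C \<pi> (integral_digits c') 0 (z - (\<Sum>n\<in>{v..-1}. c n * \<pi> powi n))"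
    using z expands_integral_digits by blast
next
  fix y
  assume "\<exists>c' v'. expands nabs C \<pi> c' v' z \<and> expands nabs C \<pi> (integral_digits c') 0 y"
  then obtain c' v' where z': "expands nabs C \<pi> c' v' z"
    and y: "expands nabs C \<pi> (integral_digits c') 0 y"
    by blast
  then have "y = z - (\<Sum>n\<in>{v'..-1}. c' n * \<pi> powi n)"
    using expands_unique expands_integral_digits by blast
  then show "y = z - (\<Sum>n\<in>{v..-1}. c n * \<pi> powi n)"
    using fractional_part_unique[OF z z'] by simp
qed

lemma bracket_in_O: "bracket nabs C \<pi> z \<in> \<O>"
proof -
  obtain c k where z: "expands nabs C \<pi> c (- int k) z"
    by (rule expands_exists)
  then show ?thesis
    using expands_in_O[OF expands_integral_digits[OF z]] by (simp add: bracket_eq)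
qed

lemma bracket_add_O:
  assumes e: "e \<in> \<O>"
  shows "bracket nabs C \<pi> (z + e) = bracket nabs C \<pi> z + e"
proof -
  obtain c k where z: "expands nabs C \<pi> c (- int k) z"
    by (rule expands_exists)
  define P where "P = (\<Sum>n\<in>{- int k..-1}. c n * \<pi> powi n)"
  have "bracket nabs C \<pi> z = z - P"
    using bracket_eq[OF z] by (simp add: P_def)
  then have "z - P + e \<in> \<O>"
    using add_in_O[OF bracket_in_O[of z] e] by simp
  \<comment> \<open>keep the fractional digits of z and expand the integral part afresh\<close>
  define d where "d = integral_digits (\<lambda>n. digit (z - P + e) (nat n))"
  define c' where "c' = (\<lambda>n. if n < 0 then c n else d n)"
  have d: "expands nabs C \<pi> d 0 (z - P + e)"
    unfolding d_def by (rule expands_digits) fact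
  have c'_digits: "c' n \<in> C" "n < - int k \<Longrightarrow> c' n = 0" for n
    using expandsD(1,2)[OF z] expandsD(1)[OF d] by (simp_all add: c'_def)
  have "(\<Sum>n\<in>{- int k..-1}. c' n * \<pi> powi n) = P"
    unfolding P_def by (intro sum.cong) (auto simp: c'_def)
  moreover have "integral_digits c' = d"
    by (auto simp: c'_def d_def)
  ultimately have "expands nabs C \<pi> c' (- int k) (z + e)"
    using d expands_iff_integral_digits[OF c'_digits] by (simp add: algebra_simps)
  then have "bracket nabs C \<pi> (z + e) = z + e - P"
    using bracket_eq \<open>(\<Sum>n\<in>{- int k..-1}. c' n * \<pi> powi n) = P\<close> by metis
  with \<open>bracket nabs C \<pi> z = z - P\<close> show ?thesis
    by simp
qed

section \<open>Scaling maps\<close>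

lemma scaling_nabs_diff_le_rad_iff:
  assumes "scaling nabs q \<O> h (int l)" "x \<in> \<O>" "y \<in> \<O>"
  shows "nabs (h x - h y) \<le> rad j \<longleftrightarrow> nabs (x - y) \<le> rad (l + j)"
proof -
  have "nabs (h x - h y) = Q ^ l * nabs (x - y)"
    using assms unfolding scaling_def by simp
  moreover have "rad j = Q ^ l * rad (l + j)"
    using Q_power_mult_rad[of l] by (simp add: rad_add)
  ultimately show ?thesis
    using Q_gt_1 by simp
qed

lemma scaling_hits_reps:
  assumes sc: "scaling nabs q \<O> h (int l)" and v: "v \<in> \<O>" and t: "t \<in> reps j"
  obtains s where "s \<in> reps j" "nabs ((h (v + \<pi> ^ l * s) - h v) - t) \<le> rad j"
proof -
  define w where "w s = v + \<pi> ^ l * s" for s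
  have w_O: "w s \<in> \<O>" if "s \<in> reps j" for s
    using cdisk_eq_UN_reps[of v l j] cdisk_subset_O[OF v] that by (auto simp: w_def intro: center_in_cdisk)
  have "nabs (h (w s) - h v) \<le> 1" if "s \<in> reps j" for s
    using scaling_nabs_diff_le_rad_iff[OF sc w_O[OF that] v, of 0] nabs_reps_le_1[OF that]
    by (simp add: w_def nabs_mult nabs_pi_power mult_left_le rad_pos less_imp_le)
  then have "\<exists>r\<in>reps j. nabs ((h (w s) - h v) - r) \<le> rad j" if "s \<in> reps j" for s
    using reps_cover that by (simp add: mem_O_iff)
  then obtain \<phi> where \<phi>: "\<phi> s \<in> reps j" "nabs ((h (w s) - h v) - \<phi> s) \<le> rad j" if "s \<in> reps j" for s
    by metis
  \<comment> \<open>h separates the subdisks of depth l + j at depth j, so by counting \<phi> is onto\<close>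
  have "inj_on \<phi> (reps j)"
  proof (rule inj_onI)
    fix s s'
    assume s: "s \<in> reps j" "s' \<in> reps j" "\<phi> s = \<phi> s'"
    have "nabs (((h (w s) - h v) - \<phi> s) - ((h (w s') - h v) - \<phi> s')) \<le> rad j"
      using \<phi>(2)[OF s(1)] \<phi>(2)[OF s(2)] by (rule nabs_diff_le)
    then have "nabs (w s - w s') \<le> rad (l + j)"
      using scaling_nabs_diff_le_rad_iff[OF sc w_O[OF s(1)] w_O[OF s(2)]] s(3) by simp
    moreover have "w s - w s' = \<pi> ^ l * (s - s')"
      by (simp add: w_def algebra_simps)
    ultimately have "nabs (s - s') \<le> rad j"
      using rad_pos[of l] by (simp add: nabs_mult nabs_pi_power rad_add)
    then show "s = s'"
      using reps_separated s by blast
  qed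
  then have "\<phi> ` reps j = reps j"
    using \<phi>(1) by (intro endo_inj_surj finite_reps) auto
  then have "t \<in> \<phi> ` reps j"
    using t by simp
  then obtain s where s: "s \<in> reps j" "\<phi> s = t"
    by blast
  with \<phi>(2)[OF s(1)] show ?thesis
    by (intro that[OF s(1)]) (simp add: w_def)
qed

lemma scaling_hits_cdisk:
  assumes sc: "scaling nabs q \<O> h (int l)" and v: "v \<in> \<O>" and d: "nabs (d - h v) \<le> 1"
  obtains x0 where "x0 \<in> cdisk v l" "h x0 \<in> cdisk d j"
proof -
  have "d - h v \<in> \<O>"
    using d by (simp add: mem_O_iff)
  then obtain t where t: "t \<in> reps j" "nabs ((d - h v) - t) \<le> rad j"
    using reps_cover[of "d - h v" j] by blast
  obtain s where s: "s \<in> reps j" "nabs ((h (v + \<pi> ^ l * s) - h v) - t) \<le> rad j"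
    using scaling_hits_reps[OF sc v t(1)] by blast
  have "nabs ((h (v + \<pi> ^ l * s) - h v - t) - ((d - h v) - t)) \<le> rad j"
    using s(2) t(2) by (rule nabs_diff_le)
  then have "h (v + \<pi> ^ l * s) \<in> cdisk d j"
    by (simp add: mem_cdisk_iff)
  moreover have "v + \<pi> ^ l * s \<in> cdisk v l"
    using cdisk_eq_UN_reps[of v l j] s(1) center_in_cdisk by blast
  ultimately show ?thesis
    using that by blast
qed

lemma scaling_preimage_cdisk:
  assumes sc: "scaling nabs q \<O> h (int l)" and v: "v \<in> \<O>"
    and x0: "x0 \<in> cdisk v l" "h x0 \<in> cdisk d j"
  shows "{x \<in> cdisk v l. h x \<in> cdisk d j} = cdisk x0 (l + j)"
proof -
  have O: "cdisk v l \<subseteq> \<O>"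
    using cdisk_subset_O[OF v] .
  have "h x \<in> cdisk d j \<longleftrightarrow> x \<in> cdisk x0 (l + j)" if "x \<in> cdisk v l" for x
  proof -
    have "x \<in> \<O>" "x0 \<in> \<O>"
      using that x0(1) O by blast+
    then show ?thesis
      using scaling_nabs_diff_le_rad_iff[OF sc, of x x0 j] by (simp add: cdisk_eq_if_mem[OF x0(2)] mem_cdisk_iff)
  qed
  moreover have "cdisk x0 (l + j) \<subseteq> cdisk v l"
    using cdisk_antimono[of l "l + j" x0] cdisk_eq_if_mem[OF x0(1)] by simp
  ultimately show ?thesis
    by blast
qed

lemma bracket_scaling_cdisk:
  assumes sc: "scaling nabs q \<O> h (int l)" and v: "v \<in> \<O>" and x: "x \<in> cdisk v l"
  shows "bracket nabs C \<pi> (h x) = bracket nabs C \<pi> (h v) + (h x - h v)"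
proof -
  have "x \<in> \<O>"
    using cdisk_subset_O[OF v] x by blast
  then have "h x - h v \<in> \<O>"
    using scaling_nabs_diff_le_rad_iff[OF sc _ v, of x 0] x by (simp add: mem_cdisk_iff mem_O_iff)
  then show ?thesis
    using bracket_add_O[of "h x - h v" "h v"] by simp
qed

lemma bracket_scaling_preimage_cdisk:
  assumes sc: "scaling nabs q \<O> h (int l)" and v: "v \<in> \<O>" and a: "a \<in> \<O>"
  obtains x0 where "{x \<in> cdisk v l. bracket nabs C \<pi> (h x) \<in> cdisk a j} = cdisk x0 (l + j)"
proof -
  define d where "d = a + h v - bracket nabs C \<pi> (h v)"
  have "bracket nabs C \<pi> (h x) - a = h x - d" if "x \<in> cdisk v l" for x
    using bracket_scaling_cdisk[OF sc v that] by (simp add: d_def algebra_simps)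
  then have eq: "{x \<in> cdisk v l. bracket nabs C \<pi> (h x) \<in> cdisk a j} = {x \<in> cdisk v l. h x \<in> cdisk d j}"
    by (auto simp: mem_cdisk_iff)
  have "nabs (d - h v) \<le> 1"
    using nabs_diff_O[OF a bracket_in_O] by (simp add: d_def)
  then obtain x0 where "x0 \<in> cdisk v l" "h x0 \<in> cdisk d j"
    using scaling_hits_cdisk[OF sc v] by blast
  then show ?thesis
    using that scaling_preimage_cdisk[OF sc v] eq by metis
qed

lemma bracket_scaling_mem_cdisk_iff:
  assumes sc: "scaling nabs q \<O> h (int l)" and r: "r \<in> \<O>" and x: "x \<in> cdisk r (l + j)"
  shows "bracket nabs C \<pi> (h x) \<in> cdisk a j \<longleftrightarrow> bracket nabs C \<pi> (h r) \<in> cdisk a j"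
proof -
  have "x \<in> cdisk r l"
    using x cdisk_antimono[of l "l + j" r] by auto
  then have "x \<in> \<O>"
    using cdisk_subset_O[OF r] by blast
  then have "nabs (h x - h r) \<le> rad j"
    using scaling_nabs_diff_le_rad_iff[OF sc _ r] x by (simp add: mem_cdisk_iff)
  then have "bracket nabs C \<pi> (h x) \<in> cdisk (bracket nabs C \<pi> (h r)) j"
    using bracket_scaling_cdisk[OF sc r \<open>x \<in> cdisk r l\<close>] by (simp add: mem_cdisk_iff)
  then show ?thesis
    by (rule mem_cdisk_iff_if_close)
qed

end

section \<open>Haar measure of disks\<close>

locale local_field_haar = local_field +
  fixes M :: "'a measure"
  assumes haar: "haar_normalized nabs q M"
begin

lemma sets_M: "sets M = sigma_sets UNIV {disk nabs q a k | a k. True}"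
  and emeasure_translate: "A \<in> sets M \<Longrightarrow> emeasure M ((\<lambda>x. a + x) ` A) = emeasure M A"
  and emeasure_O: "emeasure M \<O> = 1"
  using haar unfolding haar_normalized_def by auto

lemma cdisk_in_sets: "cdisk y m \<in> sets M"
proof -
  have "disk nabs q y (- int m) \<in> sets M"
    unfolding sets_M by (rule sigma_sets.Basic) blast
  then show ?thesis
    by (simp add: disk_eq_cdisk)
qed

lemma O_in_sets: "\<O> \<in> sets M"
  using cdisk_in_sets[of 0 0] by (simp add: O_eq_cdisk)

lemma emeasure_cdisk_eq: "emeasure M (cdisk y m) = emeasure M (cdisk 0 m)"
  using emeasure_translate[OF cdisk_in_sets[of 0 m], of y] cdisk_translate[of y m 0] by simp

lemma emeasure_cdisk_finite: "emeasure M (cdisk y m) \<noteq> \<infinity>"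
proof -
  have "emeasure M (cdisk 0 m) \<le> emeasure M \<O>"
    using cdisk_subset_O[of 0 m] O_in_sets by (intro emeasure_mono) (auto simp: mem_O_iff)
  then show ?thesis
    using emeasure_O emeasure_cdisk_eq[of y m] by (auto simp: top_unique)
qed

lemma measure_UN_reps:
  assumes S: "S \<subseteq> reps k" and A: "\<And>r. r \<in> S \<Longrightarrow> A r \<in> sets M"
    and A_sub: "\<And>r. r \<in> S \<Longrightarrow> A r \<subseteq> cdisk (u + \<pi> ^ n * r) (n + k)"
  shows "(\<Union>r\<in>S. A r) \<in> sets M \<and> measure M (\<Union>r\<in>S. A r) = (\<Sum>r\<in>S. measure M (A r))"
proof
  have "finite S"
    using S finite_reps finite_subset by blast
  then show "(\<Union>r\<in>S. A r) \<in> sets M"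
    using A by blast
  have "disjoint_family_on A S"
    using disjoint_family_on_mono[OF S disjoint_family_on_cdisk_reps[of u n k]] A_sub
    unfolding disjoint_family_on_def by blast
  moreover have "emeasure M (A r) \<noteq> \<infinity>" if "r \<in> S" for r
    using neq_top_trans[OF emeasure_cdisk_finite[unfolded infinity_ennreal_def] emeasure_mono[OF A_sub[OF that] cdisk_in_sets]] by simp
  ultimately show "measure M (\<Union>r\<in>S. A r) = (\<Sum>r\<in>S. measure M (A r))"
    using \<open>finite S\<close> A by (intro measure_finite_Union) auto
qed

lemma measure_cdisk: "measure M (cdisk y m) = rad m"
proof -
  have eq: "measure M (cdisk y' m) = measure M (cdisk 0 m)" for y'
    unfolding measure_def by (rule arg_cong[OF emeasure_cdisk_eq])
  have O: "\<O> = (\<Union>r\<in>reps m. cdisk r m)"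
    using cdisk_eq_UN_reps[of 0 0 m] O_eq_cdisk by simp
  have "1 = measure M \<O>"
    using emeasure_O by (simp add: measure_def)
  also have "\<dots> = (\<Sum>r\<in>reps m. measure M (cdisk r m))"
    unfolding O using measure_UN_reps[of "reps m" m "\<lambda>r. cdisk r m" 0 0] cdisk_in_sets by simp
  also have "\<dots> = (\<Sum>r\<in>reps m. measure M (cdisk 0 m))"
    by (intro sum.cong refl eq)
  also have "\<dots> = Q ^ m * measure M (cdisk 0 m)"
    by (simp add: card_reps)
  finally have "measure M (cdisk 0 m) = rad m"
    using Q_gt_1 by (simp add: rad_def field_simps)
  then show ?thesis
    using eq by simp
qed

section \<open>Measure of bracket preimages of disks\<close>

lemma measure_bracket_scaling_preimage:
  fixes j :: nat
  assumes sc: "scaling nabs q \<O> h (int l)" and u: "u \<in> \<O>" and "n \<le> l" and a: "a \<in> \<O>"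
  defines "S \<equiv> {x \<in> cdisk u n. bracket nabs C \<pi> (h x) \<in> cdisk a j}"
  shows "S \<in> sets M \<and> measure M S = rad (n + j)"
proof -
  define k where "k = l - n"
  have l: "l = n + k"
    using \<open>n \<le> l\<close> by (simp add: k_def)
  define A where "A r = {x \<in> cdisk (u + \<pi> ^ n * r) l. bracket nabs C \<pi> (h x) \<in> cdisk a j}" for r
  have A: "A r \<in> sets M \<and> measure M (A r) = rad (l + j)" if "r \<in> reps k" for r
  proof -
    have "u + \<pi> ^ n * r \<in> \<O>"
      using cdisk_eq_UN_reps[of u n k] cdisk_subset_O[OF u] center_in_cdisk that l by blast
    then obtain x0 where "A r = cdisk x0 (l + j)"
      unfolding A_def using bracket_scaling_preimage_cdisk[OF sc _ a] by blast
    then show ?thesis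
      by (simp add: cdisk_in_sets measure_cdisk)
  qed
  have "S = (\<Union>r\<in>reps k. A r)"
    using cdisk_eq_UN_reps[of u n k] unfolding S_def A_def l by blast
  moreover have "(\<Union>r\<in>reps k. A r) \<in> sets M \<and> measure M (\<Union>r\<in>reps k. A r) = (\<Sum>r\<in>reps k. measure M (A r))"
    using A by (intro measure_UN_reps[of _ k _ u n]) (auto simp: A_def l)
  moreover have "(\<Sum>r\<in>reps k. measure M (A r)) = rad (n + j)"
    using A card_reps Q_power_mult_rad[of k] by (simp add: l rad_add)
  ultimately show ?thesis
    by simp
qed

lemma measure_locally_constant_inter:
  fixes \<beta> :: real
  assumes P: "\<And>r x. r \<in> \<O> \<Longrightarrow> x \<in> cdisk r N \<Longrightarrow> P x \<longleftrightarrow> P r"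
    and B: "\<And>r. r \<in> \<O> \<Longrightarrow> {x \<in> cdisk r N. B x} \<in> sets M \<and> measure M {x \<in> cdisk r N. B x} = \<beta>"
  shows "{x \<in> \<O>. P x \<and> B x} \<in> sets M \<and> measure M {x \<in> \<O>. P x \<and> B x} = card {r \<in> reps N. P r} * \<beta>"
proof -
  define T where "T = {r \<in> reps N. P r}"
  have O: "\<O> = (\<Union>r\<in>reps N. cdisk r N)"
    using cdisk_eq_UN_reps[of 0 0 N] O_eq_cdisk by simp
  have "{x \<in> \<O>. P x \<and> B x} = (\<Union>r\<in>T. {x \<in> cdisk r N. B x})"
    unfolding O T_def using P reps_subset_O by blast
  moreover have "(\<Union>r\<in>T. {x \<in> cdisk r N. B x}) \<in> sets M
      \<and> measure M (\<Union>r\<in>T. {x \<in> cdisk r N. B x}) = (\<Sum>r\<in>T. measure M {x \<in> cdisk r N. B x})"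
    using B reps_subset_O by (intro measure_UN_reps[of _ N _ 0 0]) (auto simp: T_def)
  moreover have "(\<Sum>r\<in>T. measure M {x \<in> cdisk r N. B x}) = (\<Sum>r\<in>T. \<beta>)"
    using B reps_subset_O by (intro sum.cong refl) (auto simp: T_def)
  ultimately show ?thesis
    by (simp add: T_def)
qed

lemma measure_bracket_scaling_pair:
  assumes sf: "scaling nabs q \<O> f (int lf)" and sg: "scaling nabs q \<O> g (int lg)"
    and "lg + \<gamma> \<le> lf" and a: "a \<in> \<O>"
  defines "S \<equiv> {x \<in> \<O>. bracket nabs C \<pi> (f x) \<in> cdisk a \<gamma> \<and> bracket nabs C \<pi> (g x) \<in> cdisk a \<gamma>}"
  shows "S \<in> sets M \<and> measure M S = rad \<gamma> ^ 2"
proof -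
  define N where "N = lg + \<gamma>"
  let ?P = "\<lambda>x. bracket nabs C \<pi> (g x) \<in> cdisk a \<gamma>"
  let ?T = "{r \<in> reps N. ?P r}"
  have P: "?P x \<longleftrightarrow> ?P r" if "r \<in> \<O>" "x \<in> cdisk r N" for r x
    using bracket_scaling_mem_cdisk_iff[OF sg that[unfolded N_def]] .
  have "measure M {x \<in> \<O>. ?P x \<and> True} = card ?T * rad N"
    using measure_locally_constant_inter[OF P, where B = "\<lambda>_. True"] by (simp add: cdisk_in_sets measure_cdisk)
  moreover have "measure M {x \<in> \<O>. ?P x \<and> True} = rad \<gamma>"
    using measure_bracket_scaling_preimage[OF sg _ _ a, of 0 0 \<gamma>] by (simp add: O_eq_cdisk mem_cdisk_iff)
  moreover have "S \<in> sets M \<and> measure M S = card ?T * rad (N + \<gamma>)"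
    unfolding S_def using measure_locally_constant_inter[OF P]
      measure_bracket_scaling_preimage[OF sf _ _ a] \<open>lg + \<gamma> \<le> lf\<close>
    by (simp add: N_def conj_commute)
  ultimately show ?thesis
    by (simp add: rad_add power2_eq_square)
qed

end

theorem lemma3p2:
  fixes nabs :: "'a::field \<Rightarrow> real" and q :: nat and \<pi> :: 'a and C :: "'a set"
    and M :: "'a measure" and f g :: "'a \<Rightarrow> 'a" and lf lg \<gamma> :: int
    and a :: 'a and D :: "'a set"
  assumes F: "nonarch_local_field nabs q \<pi> C"
    and H: "haar_normalized nabs q M"
    and sf: "scaling nabs q (valring nabs) f lf"
    and sg: "scaling nabs q (valring nabs) g lg"
    and lam: "lf > lg" "lg \<ge> 0"
    and Dsub: "D \<subseteq> valring nabs"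
    and Ddef: "D = disk nabs q a (- \<gamma>)"
    and gam: "0 \<le> \<gamma>" "\<gamma> \<le> lf - lg"
  shows "{x \<in> valring nabs. bracket nabs C \<pi> (f x) \<in> D \<and> bracket nabs C \<pi> (g x) \<in> D} \<in> sets M
    \<and> measure M {x \<in> valring nabs. bracket nabs C \<pi> (f x) \<in> D \<and> bracket nabs C \<pi> (g x) \<in> D}
        = (\<integral>x. indicator D (bracket nabs C \<pi> (f x)) * indicator D (bracket nabs C \<pi> (g x))
              \<partial>(restrict_space M (valring nabs)))
    \<and> (\<integral>x. indicator D (bracket nabs C \<pi> (f x)) * indicator D (bracket nabs C \<pi> (g x))
              \<partial>(restrict_space M (valring nabs))) = (measure M D)^2"
proof -
  interpret local_field_haar nabs q \<pi> C M
    by unfold_locales (fact F H)+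
  define Lf Lg k where "Lf = nat lf" and "Lg = nat lg" and "k = nat \<gamma>"
  then have lf: "lf = int Lf" and lg: "lg = int Lg" and \<gamma>: "\<gamma> = int k"
    using lam gam by simp_all
  have D: "D = cdisk a k"
    by (simp add: Ddef \<gamma> disk_eq_cdisk)
  then have "a \<in> \<O>"
    using Dsub center_in_cdisk by blast
  moreover have "Lg + k \<le> Lf"
    using gam(2) by (simp add: lf lg \<gamma>)
  ultimately have S: "{x \<in> \<O>. bracket nabs C \<pi> (f x) \<in> D \<and> bracket nabs C \<pi> (g x) \<in> D} \<in> sets M
      \<and> measure M {x \<in> \<O>. bracket nabs C \<pi> (f x) \<in> D \<and> bracket nabs C \<pi> (g x) \<in> D} = rad k ^ 2"
    unfolding D using measure_bracket_scaling_pair sf sg by (simp add: lf lg)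
  moreover note integral_indicator_pair[OF O_in_sets S[THEN conjunct1]]
  moreover have "measure M D = rad k"
    by (simp add: D measure_cdisk)
  ultimately show ?thesis
    by simp
qed

end
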